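(* Let $N\ge 1$ and $1\le K\le N$ be integers, let $\lambda_s>0$, $c>0$, and let $T_{\mathrm D}>c$ be a fixed deadline. Let $T_1,\dots,T_N$ be i.i.d. random variables with CDF $F(t)=1-e^{-\lambda_s(t-c)}$ for $t>c$ (and $F(t)=0$ for $t\le c$), and let $T_N(K)$ be the $K$-th smallest of $T_1,\dots,T_N$. Fix a device index $n\in\{1,\dots,N\}$ and let $$\mathcal C_{\mathrm F,1}=\{T_N(K)<T_{\mathrm D}\}\cap\{T_n>\min\{T_{\mathrm D},T_N(K)\}\},$$ assumed to have positive probability. Then $$\mathbb E[T_N(K)\mid \mathcal C_{\mathrm F,1}]=\frac{1}{1-\mathcal Z_K}\sum_{j=0}^{K-1}\frac{B_{K,j}}{\lambda_s U_{K,j}^2}\Big[1+c\lambda_sU_{K,j}-(1+T_{\mathrm D}\lambda_sU_{K,j})V_{K,j}\Big],$$ $$\mathbb E[T_N(K)^2\mid \mathcal C_{\mathrm F,1}]=\frac{1}{1-\mathcal Z_K}\sum_{j=0}^{K-1}\frac{B_{K,j}}{\lambda_s^2 U_{K,j}^3}\Big[(1+c\lambda_sU_{K,j})^2+1-\big((1+T_{\mathrm D}\lambda_sU_{K,j})^2+1\big)V_{K,j}\Big],$$ where $B_{K,j}=K\binom{N}{K}\binom{K-1}{j}(-1)^j$, $U_{K,j}=N-K+1+j$, $V_{K,j}=e^{-\lambda_sU_{K,j}(T_{\mathrm D}-c)}$, and $\mathcal Z_K=\mathbb P(T_{\mathrm D}<T_N(K))=\sum_{i=0}^{K-1}B_{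K,i}\frac{V_{K,i}}{U_{K,i}}$.
   Context: Model: an access point multicasts a status update to $N$ devices; $T_n$ is the (shifted exponential) time needed to deliver it to device $n$, the devices' times being i.i.d. The transmission terminates at time $\min\{T_{\mathrm D},T_N(K)\}$, i.e., when the deadline expires or when $K$ devices have received it. $\mathcal C_{\mathrm F,1}$ is the event that device $n$ fails to receive the update and transmission stopped because $K$ other devices received it before the deadline. *)

theory Defs
  imports "HOL-Probability.Probability"
begin

definition kth_smallest :: "nat \<Rightarrow> nat \<Rightarrow> (nat \<Rightarrow> 'a \<Rightarrow> real) \<Rightarrow> 'a \<Rightarrow> real" where
  "kth_smallest N K T \<omega> = sort (map (\<lambda>i. T i \<omega>) [1..<N+1]) ! (K - 1)"

definition cond_expect_event :: "'a measure \<Rightarrow> ('a \<Rightarrow> real) \<Rightarrow> 'a set \<Rightarrow> real" where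
  "cond_expect_event M X C = (\<integral>\<omega>. indicator C \<omega> * X \<omega> \<partial>M) / measure M C"

definition shifted_exp_cdf :: "real \<Rightarrow> real \<Rightarrow> real \<Rightarrow> real" where
  "shifted_exp_cdf lam c t = (if t \<le> c then 0 else 1 - exp (- lam * (t - c)))"

definition coefB :: "nat \<Rightarrow> nat \<Rightarrow> nat \<Rightarrow> real" where
  "coefB N K j = real K * real (N choose K) * real ((K - 1) choose j) * (-1) ^ j"

definition coefU :: "nat \<Rightarrow> nat \<Rightarrow> nat \<Rightarrow> real" where
  "coefU N K j = real N - real K + 1 + real j"

definition coefV :: "real \<Rightarrow> real \<Rightarrow> real \<Rightarrow> nat \<Rightarrow> nat \<Rightarrow> nat \<Rightarrow> real" where
  "coefV lam c TD N K j = exp (- lam * coefU N K j * (TD - c))"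

definition probZ :: "real \<Rightarrow> real \<Rightarrow> real \<Rightarrow> nat \<Rightarrow> nat \<Rightarrow> real" where
  "probZ lam c TD N K = (\<Sum>i<K. coefB N K i * coefV lam c TD N K i / coefU N K i)"

end

theory Submission
  imports Defs
begin

text \<open>
  On the event C_F1 transmission stops at X = T_N(K) < T_D, so C_F1 = {X < T_D} \<inter> {X < T_n}.
  Since the sample is i.i.d., the expectation of 1{X < T_n} g(X) is the same for every n, and
  summing over n counts the indices above the K-th smallest, which is N - K almost surely (ties
  have probability zero for a continuous distribution). Hence E[1{X < T_n} g(X)] =
  (N - K) / N * E[g(X)], and both conditional moments are quotients of truncated moments
  E[X^p 1{X < T_D}], p = 0, 1, 2, in which the factor (N - K) / N cancels.

  These moments come from the density of X. Its CDF is the binomial tail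
  \<Sum>m\<ge>K. C(N,m) F^m (1 - F)^(N - m), which for F = 1 - q with q = exp (- lam (t - c)) equals
  \<Sum>j<K. B_j / U_j (1 - q^U_j), as both sides have the same derivative in q and vanish at q = 1.
  So the density is a finite sum of exponentials on (c, \<infinity>), whose moments over (c, T_D) are
  obtained from explicit antiderivatives.
\<close>

section \<open>Order statistics of a finite family\<close>

lemma sorted_nth_le_iff:
  fixes ys :: "'a::linorder list"
  assumes "sorted ys" "k < length ys"
  shows "ys ! k \<le> t \<longleftrightarrow> k < length (filter (\<lambda>x. x \<le> t) ys)"
  using assms
proof (induction ys arbitrary: k)
  case (Cons y ys)
  show ?case
  proof (cases "y \<le> t")
    case True
    with Cons show ?thesis by (cases k) auto
  next
    case False
    with Cons.prems have "filter (\<lambda>x. x \<le> t) ys = []" "y \<le> (y # ys) ! k"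
      by (auto simp: filter_empty_conv nth_Cons split: nat.split)
    with False show ?thesis by auto
  qed
qed simp

lemma sort_nth_le_iff:
  fixes xs :: "'a::linorder list"
  assumes "k < length xs"
  shows "sort xs ! k \<le> t \<longleftrightarrow> k < length (filter (\<lambda>x. x \<le> t) xs)"
proof -
  have "length (filter (\<lambda>x. x \<le> t) (sort xs)) = length (filter (\<lambda>x. x \<le> t) xs)"
    by (metis mset_filter mset_sort size_mset)
  then show ?thesis using sorted_nth_le_iff[of "sort xs" k t] assms by simp
qed

lemma length_filter_le_sort_nth:
  fixes xs :: "'a::linorder list"
  assumes "distinct xs" "k < length xs"
  shows "length (filter (\<lambda>x. x \<le> sort xs ! k) xs) = Suc k"
proof -
  let ?t = "sort xs ! k"
  have "k < length (filter (\<lambda>x. x \<le> ?t) xs)"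
    using sort_nth_le_iff[OF assms(2), of ?t] by simp
  moreover have "\<not> Suc k < length (filter (\<lambda>x. x \<le> ?t) xs)"
  proof
    assume less: "Suc k < length (filter (\<lambda>x. x \<le> ?t) xs)"
    then have "Suc k < length xs"
      using length_filter_le less_le_trans by blast
    moreover have "sorted_wrt (<) (sort xs)"
      using assms(1) by (simp add: strict_sorted_iff)
    ultimately have "?t < sort xs ! Suc k"
      by (simp add: sorted_wrt_nth_less)
    with less sort_nth_le_iff[of "Suc k" xs ?t] \<open>Suc k < length xs\<close> show False
      by simp
  qed
  ultimately show ?thesis by simp
qed

lemma length_filter_map_upt:
  "length (filter P (map f [1..<N+1])) = card {i \<in> {1..N}. P (f i)}"
proof -
  have "length (filter P (map f [1..<N+1])) = card ({i. P (f i)} \<inter> {1..N})"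
    by (simp add: filter_map distinct_length_filter o_def atLeastLessThanSuc_atLeastAtMost
        del: upt_Suc)
  also have "{i. P (f i)} \<inter> {1..N} = {i \<in> {1..N}. P (f i)}" by auto
  finally show ?thesis .
qed

lemma kth_smallest_cong:
  assumes "\<And>i. i \<in> {1..N} \<Longrightarrow> T i \<omega> = T' i \<omega>'"
  shows "kth_smallest N K T \<omega> = kth_smallest N K T' \<omega>'"
proof -
  have "map (\<lambda>i. T i \<omega>) [1..<N+1] = map (\<lambda>i. T' i \<omega>') [1..<N+1]"
    using assms by (intro map_cong) auto
  then show ?thesis unfolding kth_smallest_def by (simp only:)
qed

lemma kth_smallest_le_iff:
  assumes "1 \<le> K" "K \<le> N"
  shows "kth_smallest N K T \<omega> \<le> t \<longleftrightarrow> K \<le> card {i \<in> {1..N}. T i \<omega> \<le> t}"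
proof -
  have "K - 1 < length (map (\<lambda>i. T i \<omega>) [1..<N+1])" using assms by simp
  from sort_nth_le_iff[OF this, of t] assms show ?thesis
    unfolding kth_smallest_def length_filter_map_upt by linarith
qed

lemma card_greater_kth_smallest:
  assumes "1 \<le> K" "K \<le> N" "inj_on (\<lambda>i. T i \<omega>) {1..N}"
  shows "card {i \<in> {1..N}. kth_smallest N K T \<omega> < T i \<omega>} = N - K"
proof -
  define xs where "xs = map (\<lambda>i. T i \<omega>) [1..<N+1]"
  let ?X = "kth_smallest N K T \<omega>"
  have "distinct xs"
    using assms(3) by (simp add: xs_def distinct_map atLeastLessThanSuc_atLeastAtMost del: upt_Suc)
  moreover have "K - 1 < length xs" using assms by (simp add: xs_def)
  ultimately have "length (filter (\<lambda>x. x \<le> sort xs ! (K - 1)) xs) = K"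
    using length_filter_le_sort_nth[of xs "K - 1"] assms(1) by simp
  then have "card {i \<in> {1..N}. T i \<omega> \<le> ?X} = K"
    unfolding kth_smallest_def xs_def length_filter_map_upt .
  moreover have "{i \<in> {1..N}. ?X < T i \<omega>} = {1..N} - {i \<in> {1..N}. T i \<omega> \<le> ?X}"
    by auto
  moreover have "card ({1..N} - {i \<in> {1..N}. T i \<omega> \<le> ?X})
      = card {1..N} - card {i \<in> {1..N}. T i \<omega> \<le> ?X}"
    by (rule card_Diff_subset) auto
  ultimately show ?thesis
    by simp
qed

lemma kth_smallest_reindex:
  assumes "bij_betw \<sigma> {1..N} {1..N}"
  shows "kth_smallest N K (\<lambda>i. T (\<sigma> i)) \<omega> = kth_smallest N K T \<omega>"
proof -
  define xs where "xs = [1..<N+1]"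
  have "mset (map \<sigma> xs) = mset xs"
  proof (subst set_eq_iff_mset_eq_distinct[symmetric])
    show "distinct (map \<sigma> xs)" "distinct xs"
      using assms by (simp_all add: xs_def bij_betw_def distinct_map atLeastLessThanSuc_atLeastAtMost
          del: upt_Suc)
    show "set (map \<sigma> xs) = set xs"
      using assms by (simp add: xs_def bij_betw_def atLeastLessThanSuc_atLeastAtMost del: upt_Suc)
  qed
  then have "mset (map (\<lambda>i. T i \<omega>) (map \<sigma> xs)) = mset (map (\<lambda>i. T i \<omega>) xs)"
    by (simp only: mset_map)
  then have "sort (map (\<lambda>i. T (\<sigma> i) \<omega>) xs) = sort (map (\<lambda>i. T i \<omega>) xs)"
    by (intro properties_for_sort) (simp_all add: o_def)
  then show ?thesis
    unfolding kth_smallest_def xs_def by (simp only:)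
qed

lemma measurable_card_le:
  fixes T :: "nat \<Rightarrow> 'a \<Rightarrow> real"
  assumes "finite I" "\<And>i. i \<in> I \<Longrightarrow> T i \<in> borel_measurable M"
  shows "(\<lambda>\<omega>. card {i \<in> I. T i \<omega> \<le> t}) \<in> measurable M (count_space UNIV)"
proof -
  have "(\<lambda>\<omega>. card {i \<in> I. T i \<omega> \<le> t}) = (\<lambda>\<omega>. \<Sum>i\<in>I. if T i \<omega> \<le> t then 1 else 0)"
    using assms(1) by (simp add: sum.If_cases Int_def conj_commute)
  also have "\<dots> \<in> measurable M (count_space UNIV)"
    using assms(2) by measurable
  finally show ?thesis .
qed

lemma kth_smallest_measurable:
  assumes "1 \<le> K" "K \<le> N" "\<And>i. i \<in> {1..N} \<Longrightarrow> T i \<in> borel_measurable M"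
  shows "kth_smallest N K T \<in> borel_measurable M"
proof (subst borel_measurable_iff_le, intro allI)
  fix t
  have [measurable]: "(\<lambda>\<omega>. card {i \<in> {1..N}. T i \<omega> \<le> t}) \<in> measurable M (count_space UNIV)"
    using assms(3) by (intro measurable_card_le) auto
  show "{\<omega> \<in> space M. kth_smallest N K T \<omega> \<le> t} \<in> sets M"
    unfolding kth_smallest_le_iff[OF assms(1,2)] by measurable
qed

section \<open>A binomial tail identity\<close>

lemma Suc_times_binomial_eq_diff_times_binomial:
  "Suc k * (n choose Suc k) = (n - k) * (n choose k)"
  by (metis binomial_absorption binomial_absorb_comp)

definition binomial_tail :: "nat \<Rightarrow> nat \<Rightarrow> real \<Rightarrow> real" where
  "binomial_tail N K p = (\<Sum>m = K..N. real (N choose m) * p ^ m * (1 - p) ^ (N - m))"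

lemma binomial_tail_0: "1 \<le> K \<Longrightarrow> binomial_tail N K 0 = 0"
  unfolding binomial_tail_def by (intro sum.neutral) auto

lemma binomial_tail_1: "K \<le> N \<Longrightarrow> binomial_tail N K 1 = 1"
proof -
  assume "K \<le> N"
  have "binomial_tail N K 1 = (\<Sum>m = K..N. if m = N then 1 else 0)"
    unfolding binomial_tail_def by (intro sum.cong) auto
  with \<open>K \<le> N\<close> show ?thesis by simp
qed

lemma has_real_derivative_binomial_tail:
  assumes "1 \<le> K" "K \<le> N"
  shows "(binomial_tail N K has_real_derivative
            real K * real (N choose K) * p ^ (K - 1) * (1 - p) ^ (N - K)) (at p)"
proof -
  define a where "a m = real (N - m) * real (N choose m) * p ^ m * (1 - p) ^ (N - m - 1)" for m
  have deriv_term: "((\<lambda>p. real (N choose m) * p ^ m * (1 - p) ^ (N - m)) has_real_derivative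
      a (m - 1) - a m) (at p)" if "1 \<le> m" "m \<le> N" for m
  proof -
    obtain k where m: "m = Suc k" using \<open>1 \<le> m\<close> by (cases m) auto
    have "real m * real (N choose m) = real (N - k) * real (N choose k)"
      unfolding m by (metis of_nat_mult Suc_times_binomial_eq_diff_times_binomial)
    moreover have "N - k - 1 = N - m" using m by simp
    ultimately have "a (m - 1) = real m * real (N choose m) * p ^ (m - 1) * (1 - p) ^ (N - m)"
      unfolding a_def m by simp
    then show ?thesis
      unfolding a_def by (auto intro!: derivative_eq_intros simp: algebra_simps)
  qed
  have "(binomial_tail N K has_real_derivative (\<Sum>m = K..N. a (m - 1) - a m)) (at p)"
    unfolding binomial_tail_def [abs_def] using assms by (intro DERIV_sum deriv_term) auto
  also have "(\<Sum>m = K..N. a (m - 1) - a m) = a (K - 1) - a N"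
    using sum_telescope''[of "K - 1" N "\<lambda>m. - a m"] assms by simp
  also have "a (K - 1) - a N = real K * real (N choose K) * p ^ (K - 1) * (1 - p) ^ (N - K)"
  proof -
    have "real (N - (K - 1)) * real (N choose (K - 1)) = real K * real (N choose K)"
      using Suc_times_binomial_eq_diff_times_binomial[of "K - 1" N] assms(1)
      by (metis Suc_diff_le diff_Suc_1 le_add_diff_inverse of_nat_mult plus_1_eq_Suc)
    moreover have "N - (K - 1) - 1 = N - K" using assms by simp
    ultimately show ?thesis unfolding a_def by simp
  qed
  finally show ?thesis .
qed

lemma sum_coefB_mult_power:
  assumes "1 \<le> K"
  shows "(\<Sum>j<K. coefB N K j * q ^ (N - K + j))
           = real K * real (N choose K) * q ^ (N - K) * (1 - q) ^ (K - 1)"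
proof -
  have "(1 - q) ^ (K - 1) = (\<Sum>j\<le>K - 1. real ((K - 1) choose j) * (- q) ^ j * 1 ^ (K - 1 - j))"
    using binomial_ring[of "- q" 1 "K - 1"] by simp
  also have "\<dots> = (\<Sum>j<K. real ((K - 1) choose j) * (-1) ^ j * q ^ j)"
    using assms by (intro sum.cong) (auto simp: power_minus' lessThan_Suc_atMost[symmetric])
  finally have binomial: "(1 - q) ^ (K - 1) = (\<Sum>j<K. real ((K - 1) choose j) * (-1) ^ j * q ^ j)" .
  show ?thesis
    unfolding binomial coefB_def sum_distrib_left by (intro sum.cong) (auto simp: power_add)
qed

lemma coefU_eq_of_nat: "K \<le> N \<Longrightarrow> coefU N K j = real (N - K + 1 + j)"
  by (simp add: coefU_def of_nat_diff)

lemma coefU_pos: "K \<le> N \<Longrightarrow> 0 < coefU N K j"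
  by (simp add: coefU_eq_of_nat)

lemma binomial_tail_eq_sum_coefB:
  assumes "1 \<le> K" "K \<le> N"
  shows "binomial_tail N K (1 - q) = (\<Sum>j<K. coefB N K j / coefU N K j * (1 - q ^ (N - K + 1 + j)))"
proof -
  define R where "R q = (\<Sum>j<K. coefB N K j / coefU N K j * (1 - q ^ (N - K + 1 + j)))" for q
  have "((\<lambda>q. binomial_tail N K (1 - q)) has_real_derivative
          real K * real (N choose K) * (1 - q) ^ (K - 1) * q ^ (N - K) * (- 1)) (at q)" for q
  proof (rule DERIV_chain'[where f = "\<lambda>q. 1 - q" and g = "binomial_tail N K"])
    show "((\<lambda>q. 1 - q) has_real_derivative - 1) (at q)"
      by (auto intro!: derivative_eq_intros)
  qed (use has_real_derivative_binomial_tail[OF assms, of "1 - q"] in simp)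
  moreover have "(R has_real_derivative - (\<Sum>j<K. coefB N K j * q ^ (N - K + j))) (at q)" for q
    unfolding R_def [abs_def] sum_negf[symmetric]
  proof (rule DERIV_sum)
    fix j
    define m where "m = N - K + j"
    have "((\<lambda>q. q ^ Suc m) has_real_derivative real (Suc m) * q ^ m) (at q)"
      using DERIV_pow[of "Suc m" q] by simp
    then have "((\<lambda>q. coefB N K j / real (Suc m) * (1 - q ^ Suc m)) has_real_derivative
            coefB N K j / real (Suc m) * (0 - real (Suc m) * q ^ m)) (at q)"
      by (intro DERIV_cmult DERIV_diff DERIV_const)
    moreover have "coefU N K j = real (Suc m)" "N - K + 1 + j = Suc m"
      using coefU_eq_of_nat[OF assms(2), of j] by (simp_all add: m_def)
    ultimately show "((\<lambda>q. coefB N K j / coefU N K j * (1 - q ^ (N - K + 1 + j))) has_real_derivative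
            - (coefB N K j * q ^ (N - K + j))) (at q)"
      by (simp add: m_def del: of_nat_Suc)
  qed
  ultimately have "\<forall>q. ((\<lambda>q. binomial_tail N K (1 - q) - R q) has_real_derivative 0) (at q)"
    using DERIV_diff by (fastforce simp: sum_coefB_mult_power[OF assms(1)] mult_ac)
  then have "binomial_tail N K (1 - q) - R q = binomial_tail N K (1 - 1) - R 1"
    by (rule DERIV_isconst_all)
  then show ?thesis
    using binomial_tail_0[OF assms(1)] by (simp add: R_def)
qed

lemma sum_coefB_div_coefU:
  assumes "1 \<le> K" "K \<le> N"
  shows "(\<Sum>j<K. coefB N K j / coefU N K j) = 1"
  using binomial_tail_eq_sum_coefB[OF assms, of 0] binomial_tail_1[OF assms(2)] by simp

section \<open>Order statistics of an i.i.d. sample\<close>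

lemma integral_PiM_transpose:
  fixes f :: "(nat \<Rightarrow> 'b) \<Rightarrow> real"
  assumes "prob_space M" "i \<in> I" "j \<in> I" and f: "f \<in> borel_measurable (\<Pi>\<^sub>M k\<in>I. M)"
  shows "(\<integral>x. f (\<lambda>k\<in>I. x (Transposition.transpose i j k)) \<partial>(\<Pi>\<^sub>M k\<in>I. M)) = (\<integral>x. f x \<partial>(\<Pi>\<^sub>M k\<in>I. M))"
proof -
  let ?R = "\<lambda>x. \<lambda>k\<in>I. x (Transposition.transpose i j k)"
  have R_measurable: "?R \<in> measurable (\<Pi>\<^sub>M k\<in>I. M) (\<Pi>\<^sub>M k\<in>I. M)"
    using assms(2,3)
    by (intro measurable_restrict measurable_component_singleton) (auto simp: Transposition.transpose_def)
  have "distr (\<Pi>\<^sub>M k\<in>I. M) (\<Pi>\<^sub>M k\<in>I. M) ?R = (\<Pi>\<^sub>M k\<in>I. M)"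
    using assms(1-3) by (subst distr_PiM_reindex) (auto simp: Transposition.transpose_def inj_on_def)
  then show ?thesis
    using integral_distr[OF R_measurable f] by simp
qed

locale iid_order_statistic = prob_space M for M :: "'a measure" +
  fixes T :: "nat \<Rightarrow> 'a \<Rightarrow> real" and N K :: nat and F :: "real \<Rightarrow> real"
  assumes K_pos: "1 \<le> K" and K_le_N: "K \<le> N"
    and measurable_T: "\<And>i. i \<in> {1..N} \<Longrightarrow> T i \<in> borel_measurable M"
    and indep_T: "indep_vars (\<lambda>_. borel) T {1..N}"
    and prob_T_le: "\<And>i t. i \<in> {1..N} \<Longrightarrow> prob {\<omega> \<in> space M. T i \<omega> \<le> t} = F t"
begin

abbreviation "I \<equiv> {1..N}"
abbreviation "X \<equiv> kth_smallest N K T"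
abbreviation "D \<equiv> distr M borel (T 1)"

lemma one_in_I: "1 \<in> I"
  using K_pos K_le_N by simp

lemma X_measurable [measurable]: "X \<in> borel_measurable M"
  using kth_smallest_measurable[OF K_pos K_le_N] measurable_T by blast

lemma indices_le_eq_INT:
  assumes "S \<subseteq> I"
  shows "{\<omega> \<in> space M. {i \<in> I. T i \<omega> \<le> t} = S}
           = (\<Inter>i\<in>I. T i -` (if i \<in> S then {..t} else {t<..}) \<inter> space M)"
proof -
  have pointwise: "T i \<omega> \<in> (if i \<in> S then {..t} else {t<..}) \<longleftrightarrow> (T i \<omega> \<le> t \<longleftrightarrow> i \<in> S)"
    for i \<omega> by (simp add: not_le)
  have pattern: "{i \<in> I. T i \<omega> \<le> t} = S \<longleftrightarrow> (\<forall>i\<in>I. T i \<omega> \<le> t \<longleftrightarrow> i \<in> S)" for \<omega>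
    using assms by blast
  have INT: "\<omega> \<in> (\<Inter>i\<in>I. T i -` (if i \<in> S then {..t} else {t<..}) \<inter> space M)
      \<longleftrightarrow> \<omega> \<in> space M \<and> (\<forall>i\<in>I. T i \<omega> \<le> t \<longleftrightarrow> i \<in> S)" for \<omega>
    using one_in_I unfolding INT_iff vimage_eq Int_iff pointwise by blast
  show ?thesis
    by (intro set_eqI) (simp only: mem_Collect_eq pattern INT)
qed

lemma indices_le_eq_sets:
  assumes "S \<subseteq> I"
  shows "{\<omega> \<in> space M. {i \<in> I. T i \<omega> \<le> t} = S} \<in> events"
  unfolding indices_le_eq_INT[OF assms] using one_in_I measurable_T
  by (intro sets.finite_INT measurable_sets) auto

lemma prob_indices_le_eq:
  assumes "S \<subseteq> I"
  shows "prob {\<omega> \<in> space M. {i \<in> I. T i \<omega> \<le> t} = S} = F t ^ card S * (1 - F t) ^ (N - card S)"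
proof -
  define B where "B i = (if i \<in> S then {..t} else {t<..})" for i
  have "prob {\<omega> \<in> space M. {i \<in> I. T i \<omega> \<le> t} = S} = (\<Prod>i\<in>I. prob (T i -` B i \<inter> space M))"
    unfolding indices_le_eq_INT[OF assms] B_def[symmetric] using one_in_I
    by (intro indep_varsD_finite[OF indep_T]) (auto simp: B_def)
  also have "\<dots> = (\<Prod>i\<in>I. if i \<in> S then F t else 1 - F t)"
  proof (intro prod.cong refl)
    fix i assume i: "i \<in> I"
    have "{\<omega> \<in> space M. T i \<omega> \<le> t} \<in> events"
      using measurable_T[OF i] by measurable
    moreover have "T i -` {t<..} \<inter> space M = space M - {\<omega> \<in> space M. T i \<omega> \<le> t}"
      by auto
    ultimately show "prob (T i -` B i \<inter> space M) = (if i \<in> S then F t else 1 - F t)"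
      using prob_T_le[OF i] prob_compl by (auto simp: B_def vimage_def Int_def conj_commute)
  qed
  also have "\<dots> = F t ^ card S * (1 - F t) ^ card (I - S)"
    using assms by (simp add: prod.If_cases Int_absorb1 Diff_eq)
  finally show ?thesis
    using assms by (simp add: card_Diff_subset finite_subset)
qed

lemma prob_card_indices_le_eq:
  "prob {\<omega> \<in> space M. card {i \<in> I. T i \<omega> \<le> t} = m}
     = real (N choose m) * F t ^ m * (1 - F t) ^ (N - m)"
proof -
  define E where "E S = {\<omega> \<in> space M. {i \<in> I. T i \<omega> \<le> t} = S}" for S
  define Sm where "Sm = {S. S \<subseteq> I \<and> card S = m}"
  have "{\<omega> \<in> space M. card {i \<in> I. T i \<omega> \<le> t} = m} = (\<Union>S\<in>Sm. E S)"
  proof (intro set_eqI iffI)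
    fix \<omega> assume "\<omega> \<in> {\<omega> \<in> space M. card {i \<in> I. T i \<omega> \<le> t} = m}"
    then show "\<omega> \<in> (\<Union>S\<in>Sm. E S)"
      unfolding Sm_def E_def by (intro UN_I[of "{i \<in> I. T i \<omega> \<le> t}"]) auto
  qed (auto simp: Sm_def E_def)
  moreover have "E ` Sm \<subseteq> events"
    unfolding E_def Sm_def using indices_le_eq_sets by auto
  moreover have "disjoint_family_on E Sm"
    unfolding disjoint_family_on_def E_def by blast
  ultimately have "prob {\<omega> \<in> space M. card {i \<in> I. T i \<omega> \<le> t} = m} = (\<Sum>S\<in>Sm. prob (E S))"
    using finite_measure_finite_Union[of Sm E] by (simp add: Sm_def)
  also have "\<dots> = (\<Sum>S\<in>Sm. F t ^ m * (1 - F t) ^ (N - m))"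
  proof (intro sum.cong refl)
    fix S assume "S \<in> Sm"
    then show "prob (E S) = F t ^ m * (1 - F t) ^ (N - m)"
      using prob_indices_le_eq[of S t] by (simp add: Sm_def E_def)
  qed
  also have "\<dots> = real (N choose m) * F t ^ m * (1 - F t) ^ (N - m)"
    unfolding Sm_def by (simp add: n_subsets)
  finally show ?thesis .
qed

lemma prob_kth_smallest_le: "prob {\<omega> \<in> space M. X \<omega> \<le> t} = binomial_tail N K (F t)"
proof -
  define C where "C m = {\<omega> \<in> space M. card {i \<in> I. T i \<omega> \<le> t} = m}" for m
  have [measurable]: "(\<lambda>\<omega>. card {i \<in> I. T i \<omega> \<le> t}) \<in> measurable M (count_space UNIV)"
    using measurable_T by (intro measurable_card_le) auto
  have "card {i \<in> I. T i \<omega> \<le> t} \<le> card I" for \<omega>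
    by (rule card_mono) auto
  then have "card {i \<in> I. T i \<omega> \<le> t} \<le> N" for \<omega>
    by simp
  then have "{\<omega> \<in> space M. X \<omega> \<le> t} = (\<Union>m\<in>{K..N}. C m)"
    unfolding C_def kth_smallest_le_iff[OF K_pos K_le_N] by auto
  moreover have "C m \<in> events" for m
    unfolding C_def by measurable
  moreover have "disjoint_family_on C {K..N}"
    unfolding disjoint_family_on_def C_def by blast
  ultimately have "prob {\<omega> \<in> space M. X \<omega> \<le> t} = (\<Sum>m\<in>{K..N}. prob (C m))"
    using finite_measure_finite_Union[of "{K..N}" C] by auto
  then show ?thesis
    unfolding binomial_tail_def C_def prob_card_indices_le_eq .
qed

lemma cdf_distr_T: "i \<in> I \<Longrightarrow> cdf (distr M borel (T i)) = F"
proof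
  fix t assume i: "i \<in> I"
  have "T i -` {..t} \<inter> space M = {\<omega> \<in> space M. T i \<omega> \<le> t}" by auto
  then show "cdf (distr M borel (T i)) t = F t"
    unfolding cdf_def using measurable_T[OF i] prob_T_le[OF i] by (simp add: measure_distr)
qed

lemma distr_T_eq: "i \<in> I \<Longrightarrow> distr M borel (T i) = D"
  using measurable_T one_in_I
  by (intro cdf_unique real_distribution_distr) (auto simp: cdf_distr_T)

lemma distr_sample_eq_PiM: "distr M (\<Pi>\<^sub>M i\<in>I. borel) (\<lambda>\<omega>. \<lambda>i\<in>I. T i \<omega>) = (\<Pi>\<^sub>M i\<in>I. D)"
proof -
  have "distr M (\<Pi>\<^sub>M i\<in>I. borel) (\<lambda>\<omega>. \<lambda>i\<in>I. T i \<omega>) = (\<Pi>\<^sub>M i\<in>I. distr M borel (T i))"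
    using one_in_I measurable_T indep_T by (subst indep_vars_iff_distr_eq_PiM'[symmetric]) auto
  also have "\<dots> = (\<Pi>\<^sub>M i\<in>I. D)"
    by (intro PiM_cong refl distr_T_eq)
  finally show ?thesis .
qed

abbreviation "kth_coord \<equiv> kth_smallest N K (\<lambda>i x. x i)"

lemma sets_PiM_D: "sets (\<Pi>\<^sub>M i\<in>I. D) = sets (\<Pi>\<^sub>M i\<in>I. borel)"
  by (intro sets_PiM_cong) auto

lemma measurable_indicator_less_coord:
  fixes g :: "real \<Rightarrow> real"
  assumes [measurable]: "g \<in> borel_measurable borel" and "k \<in> I"
  shows "(\<lambda>x. (if kth_coord x < x k then 1 else 0) * g (kth_coord x)) \<in> borel_measurable (\<Pi>\<^sub>M i\<in>I. D)"
proof -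
  have [measurable]: "kth_coord \<in> borel_measurable (\<Pi>\<^sub>M i\<in>I. D)"
    unfolding measurable_cong_sets[OF sets_PiM_D refl]
    by (intro kth_smallest_measurable K_pos K_le_N measurable_component_singleton) auto
  have [measurable]: "(\<lambda>x. x k) \<in> borel_measurable (\<Pi>\<^sub>M i\<in>I. D)"
    unfolding measurable_cong_sets[OF sets_PiM_D refl] using \<open>k \<in> I\<close>
    by (rule measurable_component_singleton)
  show ?thesis
    by measurable
qed

lemma integral_indicator_less_eq_PiM:
  fixes g :: "real \<Rightarrow> real"
  assumes [measurable]: "g \<in> borel_measurable borel" and k: "k \<in> I"
  shows "(\<integral>\<omega>. indicator {\<omega> \<in> space M. X \<omega> < T k \<omega>} \<omega> * g (X \<omega>) \<partial>M)
           = (\<integral>x. (if kth_coord x < x k then 1 else 0) * g (kth_coord x) \<partial>(\<Pi>\<^sub>M i\<in>I. D))"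
proof -
  let ?Y = "\<lambda>\<omega>. \<lambda>i\<in>I. T i \<omega>"
  have Y_measurable: "?Y \<in> measurable M (\<Pi>\<^sub>M i\<in>I. D)"
    unfolding measurable_cong_sets[OF refl sets_PiM_D] by (intro measurable_restrict measurable_T)
  have "kth_coord (?Y \<omega>) = X \<omega>" for \<omega>
    by (rule kth_smallest_cong) simp
  then have "(\<integral>\<omega>. indicator {\<omega> \<in> space M. X \<omega> < T k \<omega>} \<omega> * g (X \<omega>) \<partial>M)
      = (\<integral>\<omega>. (if kth_coord (?Y \<omega>) < ?Y \<omega> k then 1 else 0) * g (kth_coord (?Y \<omega>)) \<partial>M)"
    using k by (intro Bochner_Integration.integral_cong) (auto simp: indicator_def)
  also have "\<dots> = (\<integral>x. (if kth_coord x < x k then 1 else 0) * g (kth_coord x) \<partial>distr M (\<Pi>\<^sub>M i\<in>I. D) ?Y)"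
    by (rule integral_distr[symmetric, OF Y_measurable measurable_indicator_less_coord[OF assms]])
  also have "distr M (\<Pi>\<^sub>M i\<in>I. D) ?Y = distr M (\<Pi>\<^sub>M i\<in>I. borel) ?Y"
    by (rule distr_cong[OF refl sets_PiM_D]) simp
  also have "\<dots> = (\<Pi>\<^sub>M i\<in>I. D)"
    by (rule distr_sample_eq_PiM)
  finally show ?thesis .
qed

lemma integral_indicator_less_exchange:
  fixes g :: "real \<Rightarrow> real"
  assumes [measurable]: "g \<in> borel_measurable borel" and i: "i \<in> I" and j: "j \<in> I"
  shows "(\<integral>\<omega>. indicator {\<omega> \<in> space M. X \<omega> < T i \<omega>} \<omega> * g (X \<omega>) \<partial>M)
           = (\<integral>\<omega>. indicator {\<omega> \<in> space M. X \<omega> < T j \<omega>} \<omega> * g (X \<omega>) \<partial>M)"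
proof -
  let ?P = "\<Pi>\<^sub>M k\<in>I. D"
  define \<phi> where "\<phi> k = (\<lambda>x. (if kth_coord x < x k then 1 else 0) * g (kth_coord x))" for k
  have swap: "\<phi> j (\<lambda>k\<in>I. x (Transposition.transpose i j k)) = \<phi> i x" for x
  proof -
    have "kth_coord (\<lambda>k\<in>I. x (Transposition.transpose i j k))
        = kth_smallest N K (\<lambda>k x. x (Transposition.transpose i j k)) x"
      using i j by (intro kth_smallest_cong) (auto simp: Transposition.transpose_def)
    also have "\<dots> = kth_coord x"
      using i j by (intro kth_smallest_reindex) simp
    finally show ?thesis
      unfolding \<phi>_def using j by simp
  qed
  have "(\<integral>x. \<phi> j x \<partial>?P) = (\<integral>x. \<phi> j (\<lambda>k\<in>I. x (Transposition.transpose i j k)) \<partial>?P)"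
    using measurable_indicator_less_coord[OF assms(1) j] unfolding \<phi>_def[symmetric]
    by (rule integral_PiM_transpose[OF prob_space_distr[OF measurable_T[OF one_in_I]] i j, symmetric])
  also have "\<dots> = (\<integral>x. \<phi> i x \<partial>?P)"
    unfolding swap ..
  finally show ?thesis
    using integral_indicator_less_eq_PiM[OF assms(1) i] integral_indicator_less_eq_PiM[OF assms(1) j]
    unfolding \<phi>_def by simp
qed

end

locale continuous_iid_order_statistic = iid_order_statistic +
  assumes continuous_F: "\<And>t. isCont F t"
begin

lemma emeasure_D_singleton: "emeasure D {x} = 0"
proof -
  interpret D: real_distribution D
    using measurable_T[OF one_in_I] by (rule real_distribution_distr)
  have "measure D {x} = 0"
    using D.isCont_cdf continuous_F cdf_distr_T[OF one_in_I] by simp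
  then show ?thesis
    using D.emeasure_eq_measure[of "{x}"] by simp
qed

lemma indep_var_T:
  assumes "i \<in> I" "j \<in> I" "i \<noteq> j"
  shows "indep_var borel (T i) borel (T j)"
proof -
  have "indep_var (\<Pi>\<^sub>M k\<in>{i}. borel) (\<lambda>\<omega>. \<lambda>k\<in>{i}. T k \<omega>) (\<Pi>\<^sub>M k\<in>{j}. borel) (\<lambda>\<omega>. \<lambda>k\<in>{j}. T k \<omega>)"
    using assms by (intro indep_var_restrict[OF indep_T]) auto
  then have "indep_var borel ((\<lambda>x. x i) \<circ> (\<lambda>\<omega>. \<lambda>k\<in>{i}. T k \<omega>)) borel ((\<lambda>x. x j) \<circ> (\<lambda>\<omega>. \<lambda>k\<in>{j}. T k \<omega>))"
    by (rule indep_var_compose[OF _ measurable_component_singleton measurable_component_singleton]) simp_all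
  then show ?thesis
    by (simp add: o_def)
qed

lemma emeasure_T_eq_T:
  assumes "i \<in> I" "j \<in> I" "i \<noteq> j"
  shows "emeasure M {\<omega> \<in> space M. T i \<omega> = T j \<omega>} = 0"
proof -
  define \<Delta> where "\<Delta> = {p :: real \<times> real. fst p = snd p}"
  have \<Delta>_sets: "\<Delta> \<in> sets (borel \<Otimes>\<^sub>M borel)"
    unfolding \<Delta>_def borel_prod by (intro borel_closed closed_Collect_eq continuous_intros)
  have pair_measurable: "(\<lambda>\<omega>. (T i \<omega>, T j \<omega>)) \<in> measurable M (borel \<Otimes>\<^sub>M borel)"
    using measurable_T assms by (intro measurable_Pair) auto
  have "distr M (borel \<Otimes>\<^sub>M borel) (\<lambda>\<omega>. (T i \<omega>, T j \<omega>)) = D \<Otimes>\<^sub>M D"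
    using indep_var_distribution_eq[of borel "T i" borel "T j"] indep_var_T[OF assms]
    by (simp add: distr_T_eq[OF assms(1)] distr_T_eq[OF assms(2)])
  moreover have "{\<omega> \<in> space M. T i \<omega> = T j \<omega>} = (\<lambda>\<omega>. (T i \<omega>, T j \<omega>)) -` \<Delta> \<inter> space M"
    by (auto simp: \<Delta>_def)
  ultimately have "emeasure M {\<omega> \<in> space M. T i \<omega> = T j \<omega>} = emeasure (D \<Otimes>\<^sub>M D) \<Delta>"
    using emeasure_distr[OF pair_measurable \<Delta>_sets] by simp
  also have "\<dots> = (\<integral>\<^sup>+x. emeasure D (Pair x -` \<Delta>) \<partial>D)"
    using \<Delta>_sets prob_space_imp_sigma_finite[OF prob_space_distr[OF measurable_T[OF one_in_I]]]
    by (intro sigma_finite_measure.emeasure_pair_measure_alt) simp_all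
  also have "\<dots> = (\<integral>\<^sup>+x. 0 \<partial>D)"
  proof (rule nn_integral_cong)
    fix x
    have "Pair x -` \<Delta> = {x}"
      by (auto simp: \<Delta>_def)
    then show "emeasure D (Pair x -` \<Delta>) = 0"
      by (simp only: emeasure_D_singleton)
  qed
  also have "\<dots> = 0"
    by simp
  finally show ?thesis .
qed

lemma AE_inj_on_T: "AE \<omega> in M. inj_on (\<lambda>i. T i \<omega>) I"
proof -
  have "AE \<omega> in M. \<forall>p\<in>{p \<in> I \<times> I. fst p \<noteq> snd p}. T (fst p) \<omega> \<noteq> T (snd p) \<omega>"
  proof (rule AE_finite_allI)
    fix p assume p: "p \<in> {p \<in> I \<times> I. fst p \<noteq> snd p}"
    have [measurable]: "T (fst p) \<in> borel_measurable M" "T (snd p) \<in> borel_measurable M"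
      using p measurable_T by auto
    have "{\<omega> \<in> space M. T (fst p) \<omega> = T (snd p) \<omega>} \<in> null_sets M"
      using p emeasure_T_eq_T[of "fst p" "snd p"] by (intro null_setsI) auto
    then show "AE \<omega> in M. T (fst p) \<omega> \<noteq> T (snd p) \<omega>"
      by (rule AE_I') auto
  qed simp
  then show ?thesis
  proof eventually_elim
    case (elim \<omega>)
    show ?case
    proof (rule inj_onI, rule ccontr)
      fix x y assume "x \<in> I" "y \<in> I" "T x \<omega> = T y \<omega>" "x \<noteq> y"
      then show False
        using elim[rule_format, of "(x, y)"] by simp
    qed
  qed
qed

lemma AE_sum_indicator_less_T:
  "AE \<omega> in M. (\<Sum>i\<in>I. indicator {\<omega> \<in> space M. X \<omega> < T i \<omega>} \<omega>) = real (N - K)"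
  using AE_inj_on_T AE_space
proof eventually_elim
  case (elim \<omega>)
  have "(\<Sum>i\<in>I. indicator {\<omega> \<in> space M. X \<omega> < T i \<omega>} \<omega>)
      = real (card (I \<inter> {i. \<omega> \<in> {\<omega> \<in> space M. X \<omega> < T i \<omega>}}))"
    by (simp add: indicator_def)
  also have "I \<inter> {i. \<omega> \<in> {\<omega> \<in> space M. X \<omega> < T i \<omega>}} = {i \<in> I. X \<omega> < T i \<omega>}"
    using elim(2) by auto
  also have "card {i \<in> I. X \<omega> < T i \<omega>} = N - K"
    using card_greater_kth_smallest[of K N T \<omega>] K_pos K_le_N elim(1) by simp
  finally show ?case .
qed

lemma integral_indicator_less_T:
  fixes g :: "real \<Rightarrow> real"
  assumes [measurable]: "g \<in> borel_measurable borel"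
    and integrable: "integrable M (\<lambda>\<omega>. g (X \<omega>))" and n: "n \<in> I"
  shows "(\<integral>\<omega>. indicator {\<omega> \<in> space M. X \<omega> < T n \<omega>} \<omega> * g (X \<omega>) \<partial>M)
           = real (N - K) / real N * (\<integral>\<omega>. g (X \<omega>) \<partial>M)"
proof -
  define A where "A i = {\<omega> \<in> space M. X \<omega> < T i \<omega>}" for i
  have A_sets: "A i \<in> events" if "i \<in> I" for i
    using measurable_T[OF that] unfolding A_def by measurable
  have integrable_A: "integrable M (\<lambda>\<omega>. indicator (A i) \<omega> * g (X \<omega>))" if "i \<in> I" for i
    using integrable_mult_indicator[OF A_sets[OF that] integrable] by simp
  have "real N * (\<integral>\<omega>. indicator (A n) \<omega> * g (X \<omega>) \<partial>M)
      = (\<Sum>i\<in>I. (\<integral>\<omega>. indicator (A i) \<omega> * g (X \<omega>) \<partial>M))"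
    unfolding A_def using integral_indicator_less_exchange[OF assms(1) _ n] by simp
  also have "\<dots> = (\<integral>\<omega>. (\<Sum>i\<in>I. indicator (A i) \<omega>) * g (X \<omega>) \<partial>M)"
    unfolding sum_distrib_right
    by (rule Bochner_Integration.integral_sum[symmetric]) (use integrable_A in auto)
  also have "\<dots> = (\<integral>\<omega>. real (N - K) * g (X \<omega>) \<partial>M)"
  proof (rule integral_cong_AE)
    show "(\<lambda>\<omega>. (\<Sum>i\<in>I. indicator (A i) \<omega>) * g (X \<omega>)) \<in> borel_measurable M"
      using A_sets by (intro borel_measurable_times borel_measurable_sum) auto
  qed (use AE_sum_indicator_less_T in \<open>auto simp: A_def\<close>)
  finally have "real N * (\<integral>\<omega>. indicator (A n) \<omega> * g (X \<omega>) \<partial>M)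
      = real (N - K) * (\<integral>\<omega>. g (X \<omega>) \<partial>M)"
    by simp
  moreover have "real N \<noteq> 0"
    using K_pos K_le_N by simp
  ultimately show ?thesis
    unfolding A_def by (simp add: field_simps del: of_nat_diff)
qed

end

section \<open>The shifted exponential distribution\<close>

text \<open>
  With q = exp (- lam (x - c)), the density K C(N,K) F^(K-1) (1 - F)^(N-K) F' of the K-th order
  statistic is K C(N,K) (1 - q)^(K-1) q^(N-K) lam q; expanding (1 - q)^(K-1) gives kth_pdf_sum.
\<close>

definition kth_pdf_sum :: "nat \<Rightarrow> nat \<Rightarrow> real \<Rightarrow> real \<Rightarrow> real \<Rightarrow> real" where
  "kth_pdf_sum N K lam c x = (\<Sum>j<K. coefB N K j * lam * exp (- lam * coefU N K j * (x - c)))"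

definition kth_pdf :: "nat \<Rightarrow> nat \<Rightarrow> real \<Rightarrow> real \<Rightarrow> real \<Rightarrow> real" where
  "kth_pdf N K lam c x = (if c < x then kth_pdf_sum N K lam c x else 0)"

definition kth_moment_prim0 :: "nat \<Rightarrow> nat \<Rightarrow> real \<Rightarrow> real \<Rightarrow> real \<Rightarrow> real" where
  "kth_moment_prim0 N K lam c x =
     (\<Sum>j<K. coefB N K j / coefU N K j * (1 - exp (- lam * coefU N K j * (x - c))))"

definition kth_moment_prim1 :: "nat \<Rightarrow> nat \<Rightarrow> real \<Rightarrow> real \<Rightarrow> real \<Rightarrow> real" where
  "kth_moment_prim1 N K lam c x =
     (\<Sum>j<K. - coefB N K j * (x / coefU N K j + 1 / (lam * (coefU N K j)\<^sup>2))
              * exp (- lam * coefU N K j * (x - c)))"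

definition kth_moment_prim2 :: "nat \<Rightarrow> nat \<Rightarrow> real \<Rightarrow> real \<Rightarrow> real \<Rightarrow> real" where
  "kth_moment_prim2 N K lam c x =
     (\<Sum>j<K. - coefB N K j * (x\<^sup>2 / coefU N K j + 2 * x / (lam * (coefU N K j)\<^sup>2)
                                + 2 / (lam\<^sup>2 * (coefU N K j) ^ 3))
              * exp (- lam * coefU N K j * (x - c)))"

lemma exp_coefU_eq_power:
  assumes "K \<le> N"
  shows "exp (- lam * coefU N K j * (x - c)) = exp (- lam * (x - c)) ^ (N - K + 1 + j)"
proof -
  have "- lam * coefU N K j * (x - c) = real (N - K + 1 + j) * (- lam * (x - c))"
    using assms by (simp add: coefU_eq_of_nat)
  then show ?thesis
    by (simp only: exp_of_nat_mult)
qed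

lemma kth_pdf_sum_nonneg:
  assumes "1 \<le> K" "K \<le> N" "0 < lam" "c \<le> x"
  shows "0 \<le> kth_pdf_sum N K lam c x"
proof -
  define q where "q = exp (- lam * (x - c))"
  have "q \<le> 1"
    unfolding q_def using assms by simp
  have "kth_pdf_sum N K lam c x = lam * q * (\<Sum>j<K. coefB N K j * q ^ (N - K + j))"
    unfolding kth_pdf_sum_def exp_coefU_eq_power[OF assms(2)] q_def[symmetric] sum_distrib_left
    by (intro sum.cong) (auto simp: power_add)
  also have "\<dots> = lam * q * (real K * real (N choose K) * q ^ (N - K) * (1 - q) ^ (K - 1))"
    by (simp add: sum_coefB_mult_power[OF assms(1)])
  also have "\<dots> \<ge> 0"
    using \<open>q \<le> 1\<close> assms by (simp add: q_def)
  finally show ?thesis .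
qed

lemma kth_pdf_nonneg: "1 \<le> K \<Longrightarrow> K \<le> N \<Longrightarrow> 0 < lam \<Longrightarrow> 0 \<le> kth_pdf N K lam c x"
  unfolding kth_pdf_def using kth_pdf_sum_nonneg[of K N lam c x] by auto

lemma kth_pdf_measurable [measurable]: "kth_pdf N K lam c \<in> borel_measurable borel"
  unfolding kth_pdf_def[abs_def] kth_pdf_sum_def by measurable

lemma isCont_kth_pdf_sum: "isCont (kth_pdf_sum N K lam c) x"
  unfolding kth_pdf_sum_def by (intro continuous_intros)

lemma has_real_derivative_kth_moment_prim0:
  assumes "K \<le> N"
  shows "(kth_moment_prim0 N K lam c has_real_derivative kth_pdf_sum N K lam c x * x ^ 0) (at x)"
  unfolding kth_moment_prim0_def[abs_def] kth_pdf_sum_def power_0 mult_1_right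
proof (rule DERIV_sum)
  fix j
  show "((\<lambda>x. coefB N K j / coefU N K j * (1 - exp (- lam * coefU N K j * (x - c))))
      has_real_derivative coefB N K j * lam * exp (- lam * coefU N K j * (x - c))) (at x)"
    using coefU_pos[OF assms, of j] by (auto intro!: derivative_eq_intros simp: field_simps)
qed

lemma has_real_derivative_kth_moment_prim1:
  assumes "K \<le> N" "0 < lam"
  shows "(kth_moment_prim1 N K lam c has_real_derivative kth_pdf_sum N K lam c x * x ^ 1) (at x)"
  unfolding kth_moment_prim1_def[abs_def] kth_pdf_sum_def sum_distrib_right
proof (rule DERIV_sum)
  fix j
  show "((\<lambda>x. - coefB N K j * (x / coefU N K j + 1 / (lam * (coefU N K j)\<^sup>2))
      * exp (- lam * coefU N K j * (x - c))) has_real_derivative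
      coefB N K j * lam * exp (- lam * coefU N K j * (x - c)) * x ^ 1) (at x)"
    using coefU_pos[OF assms(1), of j] assms(2)
    by (auto intro!: derivative_eq_intros simp: field_simps power2_eq_square)
qed

lemma has_real_derivative_kth_moment_prim2:
  assumes "K \<le> N" "0 < lam"
  shows "(kth_moment_prim2 N K lam c has_real_derivative kth_pdf_sum N K lam c x * x ^ 2) (at x)"
  unfolding kth_moment_prim2_def[abs_def] kth_pdf_sum_def sum_distrib_right
proof (rule DERIV_sum)
  fix j
  show "((\<lambda>x. - coefB N K j * (x\<^sup>2 / coefU N K j + 2 * x / (lam * (coefU N K j)\<^sup>2)
                                + 2 / (lam\<^sup>2 * (coefU N K j) ^ 3))
      * exp (- lam * coefU N K j * (x - c))) has_real_derivative
      coefB N K j * lam * exp (- lam * coefU N K j * (x - c)) * x ^ 2) (at x)"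
    using coefU_pos[OF assms(1), of j] assms(2)
    by (auto intro!: derivative_eq_intros simp: field_simps power2_eq_square power3_eq_cube)
qed

lemma kth_moment_prim0_eq_binomial_tail:
  assumes "1 \<le> K" "K \<le> N"
  shows "kth_moment_prim0 N K lam c x = binomial_tail N K (1 - exp (- lam * (x - c)))"
  unfolding kth_moment_prim0_def binomial_tail_eq_sum_coefB[OF assms]
  by (simp only: exp_coefU_eq_power[OF assms(2)])

lemma kth_moment_prim0_diff:
  assumes "1 \<le> K" "K \<le> N"
  shows "kth_moment_prim0 N K lam c TD - kth_moment_prim0 N K lam c c = 1 - probZ lam c TD N K"
  unfolding kth_moment_prim0_def probZ_def coefV_def
  using sum_coefB_div_coefU[OF assms]
  by (simp add: sum_subtractf right_diff_distrib)

lemma kth_moment_prim1_diff: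
  assumes "K \<le> N" "0 < lam"
  shows "kth_moment_prim1 N K lam c TD - kth_moment_prim1 N K lam c c =
           (\<Sum>j<K. coefB N K j / (lam * (coefU N K j)\<^sup>2) *
              (1 + c * lam * coefU N K j - (1 + TD * lam * coefU N K j) * coefV lam c TD N K j))"
  unfolding kth_moment_prim1_def sum_subtractf[symmetric]
proof (intro sum.cong refl)
  fix j
  have "coefU N K j \<noteq> 0"
    using coefU_pos[OF assms(1)] by (simp add: less_le)
  then show "- coefB N K j * (TD / coefU N K j + 1 / (lam * (coefU N K j)\<^sup>2))
              * exp (- lam * coefU N K j * (TD - c))
      - - coefB N K j * (c / coefU N K j + 1 / (lam * (coefU N K j)\<^sup>2))
              * exp (- lam * coefU N K j * (c - c))
      = coefB N K j / (lam * (coefU N K j)\<^sup>2) *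
          (1 + c * lam * coefU N K j - (1 + TD * lam * coefU N K j) * coefV lam c TD N K j)"
    using assms(2) unfolding coefV_def by (simp add: field_simps power2_eq_square)
qed

lemma kth_moment_prim2_diff:
  assumes "K \<le> N" "0 < lam"
  shows "kth_moment_prim2 N K lam c TD - kth_moment_prim2 N K lam c c =
           (\<Sum>j<K. coefB N K j / (lam\<^sup>2 * (coefU N K j) ^ 3) *
              ((1 + c * lam * coefU N K j)\<^sup>2 + 1
                 - ((1 + TD * lam * coefU N K j)\<^sup>2 + 1) * coefV lam c TD N K j))"
  unfolding kth_moment_prim2_def sum_subtractf[symmetric]
proof (intro sum.cong refl)
  fix j
  have "coefU N K j \<noteq> 0"
    using coefU_pos[OF assms(1)] by (simp add: less_le)
  then show "- coefB N K j * (TD\<^sup>2 / coefU N K j + 2 * TD / (lam * (coefU N K j)\<^sup>2)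
                                + 2 / (lam\<^sup>2 * (coefU N K j) ^ 3))
              * exp (- lam * coefU N K j * (TD - c))
      - - coefB N K j * (c\<^sup>2 / coefU N K j + 2 * c / (lam * (coefU N K j)\<^sup>2)
                                + 2 / (lam\<^sup>2 * (coefU N K j) ^ 3))
              * exp (- lam * coefU N K j * (c - c))
      = coefB N K j / (lam\<^sup>2 * (coefU N K j) ^ 3) *
          ((1 + c * lam * coefU N K j)\<^sup>2 + 1
             - ((1 + TD * lam * coefU N K j)\<^sup>2 + 1) * coefV lam c TD N K j)"
    using assms(2) unfolding coefV_def by (simp add: field_simps power2_eq_square power3_eq_cube)
qed

lemma nn_integral_kth_pdf_atMost:
  assumes "1 \<le> K" "K \<le> N" "0 < lam" "c < t"
  shows "(\<integral>\<^sup>+x. ennreal (kth_pdf N K lam c x) * indicator {..t} x \<partial>lborel)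
           = ennreal (kth_moment_prim0 N K lam c t)"
proof -
  have "AE x in lborel. ennreal (kth_pdf N K lam c x) * indicator {..t} x
      = ennreal (indicator {c..t} x * kth_pdf_sum N K lam c x)"
    using AE_lborel_singleton[of c] by eventually_elim (auto simp: kth_pdf_def indicator_def)
  then have "(\<integral>\<^sup>+x. ennreal (kth_pdf N K lam c x) * indicator {..t} x \<partial>lborel)
      = (\<integral>\<^sup>+x. ennreal (indicator {c..t} x * kth_pdf_sum N K lam c x) \<partial>lborel)"
    by (rule nn_integral_cong_AE)
  also have "\<dots> = ennreal (kth_moment_prim0 N K lam c t - kth_moment_prim0 N K lam c c)"
  proof (rule nn_integral_has_integral_lebesgue)
    show "0 \<le> kth_pdf_sum N K lam c x" if "x \<in> {c..t}" for x
      using kth_pdf_sum_nonneg assms that by auto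
    show "(kth_pdf_sum N K lam c has_integral
        kth_moment_prim0 N K lam c t - kth_moment_prim0 N K lam c c) {c..t}"
      using assms has_real_derivative_kth_moment_prim0[OF assms(2)]
      by (intro fundamental_theorem_of_calculus)
         (auto simp: has_real_derivative_iff_has_vector_derivative[symmetric]
           intro: has_field_derivative_at_within)
  qed
  finally show ?thesis
    by (simp add: kth_moment_prim0_def)
qed

lemma integral_kth_pdf_power:
  fixes G :: "real \<Rightarrow> real"
  assumes "c < TD"
    and G: "\<And>x. (G has_real_derivative kth_pdf_sum N K lam c x * x ^ p) (at x)"
  shows "integrable lborel (\<lambda>x. kth_pdf N K lam c x * (indicator {..<TD} x * x ^ p))"
    and "(\<integral>x. kth_pdf N K lam c x * (indicator {..<TD} x * x ^ p) \<partial>lborel) = G TD - G c"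
proof -
  let ?f = "\<lambda>x. kth_pdf N K lam c x * (indicator {..<TD} x * x ^ p)"
  let ?h = "\<lambda>x. kth_pdf_sum N K lam c x * x ^ p * indicator {c..TD} x"
  have AE_eq: "AE x in lborel. ?f x = ?h x"
    using AE_lborel_singleton[of c] AE_lborel_singleton[of TD]
    by eventually_elim (use \<open>c < TD\<close> in \<open>auto simp: kth_pdf_def indicator_def\<close>)
  have h_integrable: "integrable lborel ?h"
    by (intro borel_integrable_atLeastAtMost continuous_intros isCont_kth_pdf_sum)
  have f_measurable: "?f \<in> borel_measurable lborel"
    by measurable
  show "integrable lborel ?f"
    using integrable_cong_AE[OF f_measurable borel_measurable_integrable[OF h_integrable] AE_eq]
      h_integrable by simp
  have "(\<integral>x. ?f x \<partial>lborel) = (\<integral>x. ?h x \<partial>lborel)"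
    using integral_cong_AE[OF f_measurable borel_measurable_integrable[OF h_integrable] AE_eq] .
  also have "\<dots> = (LBINT x=c..TD. kth_pdf_sum N K lam c x * x ^ p)"
    using \<open>c < TD\<close> by (simp add: interval_integral_Icc set_lebesgue_integral_def mult.commute)
  also have "\<dots> = G TD - G c"
  proof (rule interval_integral_FTC_finite)
    show "continuous_on {min c TD..max c TD} (\<lambda>x. kth_pdf_sum N K lam c x * x ^ p)"
      by (intro continuous_at_imp_continuous_on ballI continuous_intros isCont_kth_pdf_sum)
    show "(G has_vector_derivative kth_pdf_sum N K lam c x * x ^ p) (at x within {min c TD..max c TD})"
      for x using G[of x]
      by (auto simp: has_real_derivative_iff_has_vector_derivative[symmetric]
          intro: has_field_derivative_at_within)
  qed
  finally show "(\<integral>x. ?f x \<partial>lborel) = G TD - G c" .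
qed

lemma shifted_exp_cdf_eq_max:
  assumes "0 < lam"
  shows "shifted_exp_cdf lam c t = max 0 (1 - exp (- lam * (t - c)))"
proof (cases "t \<le> c")
  case True
  then have "1 \<le> exp (- lam * (t - c))"
    using assms by (simp add: mult_nonneg_nonpos)
  with True show ?thesis
    by (simp add: shifted_exp_cdf_def)
qed (use assms in \<open>simp add: shifted_exp_cdf_def\<close>)

locale shifted_exp_order_statistic =
  iid_order_statistic M T N K "shifted_exp_cdf lam c" for M T N K lam c +
  assumes lam_pos: "0 < lam"

sublocale shifted_exp_order_statistic \<subseteq> continuous_iid_order_statistic M T N K "shifted_exp_cdf lam c"
proof
  fix t
  have "shifted_exp_cdf lam c = (\<lambda>t. max 0 (1 - exp (- lam * (t - c))))"
    using shifted_exp_cdf_eq_max[OF lam_pos] by blast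
  then show "isCont (shifted_exp_cdf lam c) t"
    by (simp add: continuous_intros)
qed

context shifted_exp_order_statistic
begin

abbreviation "kth_distribution \<equiv> density lborel (\<lambda>x. ennreal (kth_pdf N K lam c x))"

lemma prob_X_le: "prob {\<omega> \<in> space M. X \<omega> \<le> t} = (if t \<le> c then 0 else kth_moment_prim0 N K lam c t)"
  using prob_kth_smallest_le[of t] binomial_tail_0[OF K_pos]
    kth_moment_prim0_eq_binomial_tail[OF K_pos K_le_N, of lam c t]
  by (simp add: shifted_exp_cdf_def)

lemma emeasure_kth_distribution_atMost:
  "emeasure kth_distribution {..t} = ennreal (prob {\<omega> \<in> space M. X \<omega> \<le> t})"
proof -
  have "emeasure kth_distribution {..t}
      = (\<integral>\<^sup>+x. ennreal (kth_pdf N K lam c x) * indicator {..t} x \<partial>lborel)"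
    by (rule emeasure_density) auto
  also have "\<dots> = ennreal (prob {\<omega> \<in> space M. X \<omega> \<le> t})"
  proof (cases "t \<le> c")
    case True
    then have "(\<lambda>x. ennreal (kth_pdf N K lam c x) * indicator {..t} x) = (\<lambda>x. 0)"
      by (auto simp: kth_pdf_def indicator_def)
    with True show ?thesis
      by (simp add: prob_X_le)
  next
    case False
    then show ?thesis
      using nn_integral_kth_pdf_atMost[OF K_pos K_le_N lam_pos] by (simp add: prob_X_le)
  qed
  finally show ?thesis .
qed

lemma emeasure_distr_X_atMost:
  "emeasure (distr M borel X) {..t} = ennreal (prob {\<omega> \<in> space M. X \<omega> \<le> t})"
proof -
  have "X -` {..t} \<inter> space M = {\<omega> \<in> space M. X \<omega> \<le> t}"
    by auto
  then show ?thesis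
    by (simp add: emeasure_distr emeasure_eq_measure)
qed

lemma prob_space_kth_distribution: "prob_space kth_distribution"
proof
  have inc: "incseq (\<lambda>n::nat. {..real n})"
    by (auto simp: incseq_def)
  have "(\<Union>n::nat. {..real n}) = UNIV"
    by (auto intro: real_arch_simple)
  then have SUP_eq: "emeasure Q UNIV = (SUP n. emeasure Q {..real n})"
    if "sets Q = sets borel" for Q :: "real measure"
  proof -
    have "range (\<lambda>n::nat. {..real n}) \<subseteq> sets Q"
      by (simp add: that image_subset_iff)
    then show ?thesis
      using SUP_emeasure_incseq[OF _ inc, of Q] \<open>(\<Union>n::nat. {..real n}) = UNIV\<close> by simp
  qed
  have "emeasure kth_distribution UNIV = (SUP n. emeasure kth_distribution {..real n})"
    "emeasure (distr M borel X) UNIV = (SUP n. emeasure (distr M borel X) {..real n})"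
    by (simp_all add: SUP_eq)
  then have "emeasure kth_distribution UNIV = emeasure (distr M borel X) UNIV"
    by (simp add: emeasure_kth_distribution_atMost emeasure_distr_X_atMost)
  also have "\<dots> = 1"
    using prob_space.emeasure_space_1[OF prob_space_distr[OF X_measurable]] by simp
  finally show "emeasure kth_distribution (space kth_distribution) = 1"
    by simp
qed

lemma distr_X_eq_kth_distribution: "distr M borel X = kth_distribution"
proof (rule cdf_unique)
  show "real_distribution (distr M borel X)"
    by (rule real_distribution_distr) simp
  show "real_distribution kth_distribution"
    using prob_space_kth_distribution by (simp add: real_distribution_def real_distribution_axioms_def)
  show "cdf (distr M borel X) = cdf kth_distribution"
    by (rule ext) (simp add: cdf_def measure_def emeasure_kth_distribution_atMost emeasure_distr_X_atMost)
qed

lemma integral_kth_smallest: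
  fixes g :: "real \<Rightarrow> real"
  assumes [measurable]: "g \<in> borel_measurable borel"
    and integrable: "integrable lborel (\<lambda>x. kth_pdf N K lam c x * g x)"
  shows "integrable M (\<lambda>\<omega>. g (X \<omega>))"
    and "(\<integral>\<omega>. g (X \<omega>) \<partial>M) = (\<integral>x. kth_pdf N K lam c x * g x \<partial>lborel)"
proof -
  have nonneg: "AE x in lborel. 0 \<le> kth_pdf N K lam c x"
    using kth_pdf_nonneg[OF K_pos K_le_N lam_pos] by simp
  have "integrable kth_distribution g"
    using integrable nonneg by (subst integrable_density) auto
  then show "integrable M (\<lambda>\<omega>. g (X \<omega>))"
    by (simp flip: distr_X_eq_kth_distribution add: integrable_distr_eq)
  have "(\<integral>\<omega>. g (X \<omega>) \<partial>M) = (\<integral>x. g x \<partial>distr M borel X)"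
    by (rule integral_distr[symmetric]) auto
  also have "\<dots> = (\<integral>x. kth_pdf N K lam c x * g x \<partial>lborel)"
    unfolding distr_X_eq_kth_distribution using nonneg by (subst integral_density) auto
  finally show "(\<integral>\<omega>. g (X \<omega>) \<partial>M) = (\<integral>x. kth_pdf N K lam c x * g x \<partial>lborel)" .
qed

lemma integral_failure_event_power:
  fixes G :: "real \<Rightarrow> real"
  assumes n: "n \<in> I" and "c < TD"
    and G: "\<And>x. (G has_real_derivative kth_pdf_sum N K lam c x * x ^ p) (at x)"
  shows "(\<integral>\<omega>. indicator {\<omega> \<in> space M. X \<omega> < TD \<and> T n \<omega> > min TD (X \<omega>)} \<omega> * X \<omega> ^ p \<partial>M)
           = real (N - K) / real N * (G TD - G c)"
proof -
  define g where "g x = indicator {..<TD} x * x ^ p" for x :: real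
  have [measurable]: "g \<in> borel_measurable borel"
    unfolding g_def by measurable
  have g_integrable: "integrable lborel (\<lambda>x. kth_pdf N K lam c x * g x)"
    unfolding g_def using integral_kth_pdf_power(1)[OF \<open>c < TD\<close> G] .
  have "indicator {\<omega> \<in> space M. X \<omega> < TD \<and> T n \<omega> > min TD (X \<omega>)} \<omega> * X \<omega> ^ p
      = indicator {\<omega> \<in> space M. X \<omega> < T n \<omega>} \<omega> * g (X \<omega>)" for \<omega>
    by (auto simp: g_def indicator_def min_def)
  then have "(\<integral>\<omega>. indicator {\<omega> \<in> space M. X \<omega> < TD \<and> T n \<omega> > min TD (X \<omega>)} \<omega> * X \<omega> ^ p \<partial>M)
      = (\<integral>\<omega>. indicator {\<omega> \<in> space M. X \<omega> < T n \<omega>} \<omega> * g (X \<omega>) \<partial>M)"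
    by simp
  also have "\<dots> = real (N - K) / real N * (\<integral>\<omega>. g (X \<omega>) \<partial>M)"
    using integral_kth_smallest(1)[OF _ g_integrable] n by (intro integral_indicator_less_T) simp_all
  also have "(\<integral>\<omega>. g (X \<omega>) \<partial>M) = G TD - G c"
    using integral_kth_smallest(2)[OF _ g_integrable] integral_kth_pdf_power(2)[OF \<open>c < TD\<close> G]
    by (simp add: g_def)
  finally show ?thesis .
qed

end

theorem proposition1:
  fixes M :: "'a measure" and T :: "nat \<Rightarrow> 'a \<Rightarrow> real"
    and N K n :: nat and lam c TD :: real
  assumes "prob_space M"
    and "N \<ge> 1" and "1 \<le> K" and "K \<le> N"
    and "lam > 0" and "c > 0" and "TD > c"
    and "\<And>i. i \<in> {1..N} \<Longrightarrow> T i \<in> borel_measurable M"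
    and "prob_space.indep_vars M (\<lambda>_. borel) T {1..N}"
    and "\<And>i t. i \<in> {1..N} \<Longrightarrow>
           measure M {\<omega> \<in> space M. T i \<omega> \<le> t} = shifted_exp_cdf lam c t"
    and "n \<in> {1..N}"
    and "CF1 = {\<omega> \<in> space M. kth_smallest N K T \<omega> < TD \<and>
                  T n \<omega> > min TD (kth_smallest N K T \<omega>)}"
    and "measure M CF1 > 0"
  shows "cond_expect_event M (kth_smallest N K T) CF1 =
           1 / (1 - probZ lam c TD N K) *
           (\<Sum>j<K. coefB N K j / (lam * (coefU N K j)\<^sup>2) *
              (1 + c * lam * coefU N K j
                 - (1 + TD * lam * coefU N K j) * coefV lam c TD N K j))
         \<and> cond_expect_event M (\<lambda>\<omega>. (kth_smallest N K T \<omega>)\<^sup>2) CF1 =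
           1 / (1 - probZ lam c TD N K) *
           (\<Sum>j<K. coefB N K j / (lam\<^sup>2 * (coefU N K j) ^ 3) *
              ((1 + c * lam * coefU N K j)\<^sup>2 + 1
                 - ((1 + TD * lam * coefU N K j)\<^sup>2 + 1) * coefV lam c TD N K j))"
proof -
  interpret shifted_exp_order_statistic M T N K lam c
    by (intro shifted_exp_order_statistic.intro iid_order_statistic.intro
        iid_order_statistic_axioms.intro shifted_exp_order_statistic_axioms.intro) (fact assms)+
  let ?r = "real (N - K) / real N"
  have moment: "(\<integral>\<omega>. indicator CF1 \<omega> * kth_smallest N K T \<omega> ^ p \<partial>M) = ?r * (G TD - G c)"
    if "\<And>x. (G has_real_derivative kth_pdf_sum N K lam c x * x ^ p) (at x)" for G p
    unfolding assms(12) using integral_failure_event_power[OF assms(11) assms(7) that] .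
  have "measure M CF1 = (\<integral>\<omega>. indicator CF1 \<omega> * kth_smallest N K T \<omega> ^ 0 \<partial>M)"
    using assms(12) by (simp add: Int_absorb2)
  then have m0: "measure M CF1 = ?r * (1 - probZ lam c TD N K)"
    using moment[OF has_real_derivative_kth_moment_prim0[OF assms(4)]]
      kth_moment_prim0_diff[OF assms(3,4)] by simp
  then have "?r \<noteq> 0"
    using assms(13) by (metis less_irrefl mult_zero_left)
  then show ?thesis
    using m0 moment[OF has_real_derivative_kth_moment_prim1[OF assms(4,5)]]
      moment[OF has_real_derivative_kth_moment_prim2[OF assms(4,5)]]
    unfolding cond_expect_event_def kth_moment_prim1_diff[OF assms(4,5)]
      kth_moment_prim2_diff[OF assms(4,5)]
    by simp
qed

end
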